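(* In the setting described in the context, with $C_\phi$ a Lipschitz constant of $\phi$, for every $m$, $$\sum_{[C]\ \text{green cylinder}}\ \bigl\|H_{m}|_{[C]}\bigr\|_\infty\,\nu_m([C])\le e^{C_\phi/2}.$$
   Context: Setting: $A$ ($K\times K$) and $D$ ($N\times N$) are irreducible $\{0,1\}$-matrices; $M_0$ is a $(K+N)\times(K+N)$ $\{0,1\}$-matrix with diagonal blocks $A$, $D$ and some power with all entries positive; the alphabet is $\{\alpha_1,\dots,\alpha_K,\delta_1,\dots,\delta_N\}$; $\Sigma_0$ is the one-sided SFT for $M_0$ with shift $\sigma$ and metric $d(\omega,\omega')=2^{-\min\{k:\omega_k\ne\omega'_k\}}$; $\Sigma_A,\Sigma_D$ are the points with only $\alpha$-digits, resp. only $\delta$-digits; $\phi:\Sigma_0\to\mathbb R$ is Lipschitz with $|\phi(x)-\phi(y)|\le C_\phi d(x,y)$ and has the same pressure $P$ on $\Sigma_A$ and $\Sigma_D$. $\alpha_j\delta_l$ denotes any allowed word $\alpha$-digit then $\delta$-digit, $\delta_i\alpha_k$ any allowed word $\delta$-digit then $\alpha$-digit; $\delta^n,\alpha^n$ denote words of $n$ $\delta$-, resp. $\alpha$-digits. $A'\le A$, $D'\le D$ entrywise are $\{0,1\}$-matrices with $A'\ne A$, $D'\ne D$, rows of $A'$ indexed by $\alpha$-digits that can follow a $\delta$-digit nonzero, rows of $D'$ indexed by $\delta$-digits that can follow an $\alpha$-digit nonzero; $(n_m),(n'_m)$ increasing integer sequences tending to $\infty$. $\Sigma_m\subset\Sigma_0$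 is obtained by additionally forbidding: $\alpha_j\delta_l\delta^n\delta_i\alpha_k$ with $n<n'_m-2$, or with $n\ge n'_m-2$ and $\delta_l$ followed by the first $n'_m-2$ letters of $\delta^n$ not $D'$-eligible; $\delta_i\alpha_k\alpha^n\alpha_j\delta_l$ with $n<n_m-2$, or with $n\ge n_m-2$ and $\alpha_k$ followed by the first $n_m-2$ letters of $\alpha^n$ not $A'$-eligible (eligible = all consecutive transitions allowed by the matrix). $P_m$ is the pressure of $\phi$ on $\Sigma_m$. Induced scheme: green cylinders are the 2-cylinders $[\alpha_j\delta_l]$ and $[\delta_i\alpha_k]$, and $G$ is their union. For $x\in[\delta_i\alpha_k]$ its $g_m$-preimages are the points $y=\alpha_j\delta_l w x$ (with $w$ a $\delta$-word) such that $\alpha_j\delta_l w\delta_i\alpha_k$ is allowed in $\Sigma_m$, with return time $r_m(y)=|w|+2$; symmetrically for $x\in[\alpha_j\delta_l]$. The induced transfer operator is $\mathcal L_{G,m}f(x)=\sum_{y:\,g_m(y)=x}e^{S_{r_m(y)}\phi(y)-r_m(y)P_m}f(y)$, with $S_n\phi=\sum_{i<n}\phi\circ\sigma^i$. It has spectral radius 1; $\nu_m$ is the probability with $\int\mathcal L_{G,m}f\,d\nu_m=\int f\,d\nu_m$, and $H_m=\lim_{n}\frac1n\sum_{k=0}^{n-1}\mathcal L_{G,m}^k(\mathbf 1_G)$ (uniform limit) is the positive continuous eigenfunction $\mathcal L_{G,m}H_m=H_m$ with $\int H_m\,d\nu_m=1$. *)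

theory Defs
  imports "HOL-Probability.Probability"
begin

text \<open>Letters are natural numbers: the alpha-digit alpha_(j+1) is j (j < K),
  the delta-digit delta_(i+1) is K + i (i < N).  Square {0,1}-matrices of size d are
  functions nat => nat => nat of which only indices < d matter. The topology on nat => nat
  is the product topology (nat discrete), which induces the metric topology of d on Sigma_0.\<close>

definition isA :: "nat \<Rightarrow> nat \<Rightarrow> bool" where
  "isA K a \<longleftrightarrow> a < K"

definition isD :: "nat \<Rightarrow> nat \<Rightarrow> nat \<Rightarrow> bool" where
  "isD K N a \<longleftrightarrow> K \<le> a \<and> a < K + N"

fun mpow :: "nat \<Rightarrow> (nat \<Rightarrow> nat \<Rightarrow> nat) \<Rightarrow> nat \<Rightarrow> nat \<Rightarrow> nat \<Rightarrow> nat" where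
  "mpow d M 0 i j = (if i = j then 1 else 0)"
| "mpow d M (Suc n) i j = (\<Sum>k<d. mpow d M n i k * M k j)"

definition zero_one_matrix :: "nat \<Rightarrow> (nat \<Rightarrow> nat \<Rightarrow> nat) \<Rightarrow> bool" where
  "zero_one_matrix d M \<longleftrightarrow> (\<forall>i<d. \<forall>j<d. M i j \<in> {0, 1})"

definition irreducible_matrix :: "nat \<Rightarrow> (nat \<Rightarrow> nat \<Rightarrow> nat) \<Rightarrow> bool" where
  "irreducible_matrix d M \<longleftrightarrow> (\<forall>i<d. \<forall>j<d. \<exists>n>0. mpow d M n i j > 0)"

definition primitive_matrix :: "nat \<Rightarrow> (nat \<Rightarrow> nat \<Rightarrow> nat) \<Rightarrow> bool" where
  "primitive_matrix d M \<longleftrightarrow> (\<exists>p. \<forall>i<d. \<forall>j<d. mpow d M p i j > 0)"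

definition SFT :: "nat \<Rightarrow> (nat \<Rightarrow> nat \<Rightarrow> nat) \<Rightarrow> (nat \<Rightarrow> nat) set" where
  "SFT d M = {x. \<forall>k. x k < d \<and> M (x k) (x (Suc k)) = 1}"

definition shift :: "nat \<Rightarrow> (nat \<Rightarrow> nat) \<Rightarrow> (nat \<Rightarrow> nat)" where
  "shift r x = (\<lambda>i. x (i + r))"

definition sdist :: "(nat \<Rightarrow> nat) \<Rightarrow> (nat \<Rightarrow> nat) \<Rightarrow> real" where
  "sdist x y = (if x = y then 0 else 2 powr (- real (LEAST k. x k \<noteq> y k)))"

definition birk :: "((nat \<Rightarrow> nat) \<Rightarrow> real) \<Rightarrow> nat \<Rightarrow> (nat \<Rightarrow> nat) \<Rightarrow> real" where
  "birk \<phi> n x = (\<Sum>i<n. \<phi> (shift i x))"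

definition pressure :: "((nat \<Rightarrow> nat) \<Rightarrow> real) \<Rightarrow> (nat \<Rightarrow> nat) set \<Rightarrow> real" where
  "pressure \<phi> X = lim (\<lambda>n. ln (\<Sum>w\<in>(\<lambda>x. map x [0..<n]) ` X.
       exp (SUP x\<in>{x\<in>X. map x [0..<n] = w}. birk \<phi> n x)) / real n)"

definition only_A :: "nat \<Rightarrow> (nat \<Rightarrow> nat) set \<Rightarrow> (nat \<Rightarrow> nat) set" where
  "only_A K S = {x\<in>S. \<forall>k. isA K (x k)}"

definition only_D :: "nat \<Rightarrow> nat \<Rightarrow> (nat \<Rightarrow> nat) set \<Rightarrow> (nat \<Rightarrow> nat) set" where
  "only_D K N S = {x\<in>S. \<forall>k. isD K N (x k)}"

definition eligible :: "(nat \<Rightarrow> nat \<Rightarrow> nat) \<Rightarrow> nat list \<Rightarrow> bool" where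
  "eligible M l \<longleftrightarrow> (\<forall>i. Suc i < length l \<longrightarrow> M (l ! i) (l ! Suc i) = 1)"

text \<open>Forbidden words of Sigma_m; nm = n_m, nm' = n'_m.
  Delta-indices are letter - K, alpha-indices are the letters themselves.\<close>
definition forbidden_D :: "nat \<Rightarrow> nat \<Rightarrow> (nat \<Rightarrow> nat \<Rightarrow> nat) \<Rightarrow> nat \<Rightarrow> nat list \<Rightarrow> bool" where
  "forbidden_D K N D' nm' u \<longleftrightarrow> (\<exists>a dl w di b. u = [a, dl] @ w @ [di, b] \<and>
      isA K a \<and> isD K N dl \<and> (\<forall>c\<in>set w. isD K N c) \<and> isD K N di \<and> isA K b \<and>
      (length w < nm' - 2 \<or>
       (length w \<ge> nm' - 2 \<and> \<not> eligible D' (map (\<lambda>c. c - K) (dl # take (nm' - 2) w)))))"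

definition forbidden_A :: "nat \<Rightarrow> nat \<Rightarrow> (nat \<Rightarrow> nat \<Rightarrow> nat) \<Rightarrow> nat \<Rightarrow> nat list \<Rightarrow> bool" where
  "forbidden_A K N A' nm u \<longleftrightarrow> (\<exists>d ak w aj e. u = [d, ak] @ w @ [aj, e] \<and>
      isD K N d \<and> isA K ak \<and> (\<forall>c\<in>set w. isA K c) \<and> isA K aj \<and> isD K N e \<and>
      (length w < nm - 2 \<or>
       (length w \<ge> nm - 2 \<and> \<not> eligible A' (ak # take (nm - 2) w))))"

definition Sigma_m :: "nat \<Rightarrow> nat \<Rightarrow> (nat \<Rightarrow> nat \<Rightarrow> nat) \<Rightarrow> (nat \<Rightarrow> nat \<Rightarrow> nat) \<Rightarrow>
    (nat \<Rightarrow> nat \<Rightarrow> nat) \<Rightarrow> nat \<Rightarrow> nat \<Rightarrow> (nat \<Rightarrow> nat) set" where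
  "Sigma_m K N M0 A' D' nm nm' = {x \<in> SFT (K + N) M0. \<forall>p l.
      \<not> forbidden_D K N D' nm' (map x [p..<p + l]) \<and> \<not> forbidden_A K N A' nm (map x [p..<p + l])}"

definition cyl2 :: "nat \<Rightarrow> nat \<Rightarrow> (nat \<Rightarrow> nat) set" where
  "cyl2 a b = {x. x 0 = a \<and> x 1 = b}"

definition green_pairs :: "nat \<Rightarrow> nat \<Rightarrow> (nat \<Rightarrow> nat \<Rightarrow> nat) \<Rightarrow> (nat \<times> nat) set" where
  "green_pairs K N M0 = {(a, b). a < K + N \<and> b < K + N \<and> M0 a b = 1 \<and>
      (isA K a \<and> isD K N b \<or> isD K N a \<and> isA K b)}"

definition green :: "nat \<Rightarrow> nat \<Rightarrow> (nat \<Rightarrow> nat) set \<Rightarrow> (nat \<Rightarrow> nat) set" where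
  "green K N S = {x \<in> S. isA K (x 0) \<and> isD K N (x 1) \<or> isD K N (x 0) \<and> isA K (x 1)}"

text \<open>Preimages under the induced map g_m, paired with their return time:
  y = alpha delta w x (w a delta-word) with x in [delta alpha], r = |w| + 2, and symmetrically.
  Allowedness in Sigma_m is expressed by y being a point of Sigma_m.\<close>
definition gpre :: "nat \<Rightarrow> nat \<Rightarrow> (nat \<Rightarrow> nat) set \<Rightarrow> (nat \<Rightarrow> nat) \<Rightarrow> ((nat \<Rightarrow> nat) \<times> nat) set" where
  "gpre K N S x = {(y, r). y \<in> S \<and> 2 \<le> r \<and> shift r y = x \<and>
     ((isA K (y 0) \<and> (\<forall>i\<in>{1..<r}. isD K N (y i)) \<and> isD K N (x 0) \<and> isA K (x 1)) \<or>
      (isD K N (y 0) \<and> (\<forall>i\<in>{1..<r}. isA K (y i)) \<and> isA K (x 0) \<and> isD K N (x 1)))}"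

definition induced_op :: "nat \<Rightarrow> nat \<Rightarrow> (nat \<Rightarrow> nat) set \<Rightarrow> ((nat \<Rightarrow> nat) \<Rightarrow> real) \<Rightarrow> real \<Rightarrow>
    ((nat \<Rightarrow> nat) \<Rightarrow> real) \<Rightarrow> (nat \<Rightarrow> nat) \<Rightarrow> real" where
  "induced_op K N S \<phi> P f x =
     (\<Sum>\<^sub>\<infinity>(y, r)\<in>gpre K N S x. exp (birk \<phi> r y - real r * P) * f y)"

end

theory Submission
  imports Defs
begin

(* If x, x' in Sigma_m agree on n >= 2 letters, their g_m-preimages are
   paired by regrafting: a preimage of x with return time r has its first r letters kept and
   x replaced by x'.  The result is again in Sigma_m, because every forbidden word is
   monochromatic in its interior and so cannot contain the green pair x_0 x_1.  Paired
   preimages agree on n + r letters, so their Birkhoff sums differ by at most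
   C (2^-n - 2^-(n+r)), and induction on j gives
     L^j 1_G (x) <= exp (C 2^-n) L^j 1_G (x').
   This passes to the Cesaro averages and to their limit H, which is therefore continuous
   and satisfies sup_[C] H <= e^(C/4) H(x') for every x' in a green cylinder [C].
   Integrating over [C] and summing gives at most e^(C/4) times the integral of H, and that
   integral is at most 1 because the integral of L f against nu equals that of f, so the
   integral of L^j 1_G is nu(G).
   If C < 0 the Lipschitz condition forces Sigma_0 to have at most one point, so every green
   cylinder is empty. *)

lemma infsum_le_scaled_if_comparable:
  fixes f g :: "'a \<Rightarrow> real"
  assumes "\<And>p. p \<in> A \<Longrightarrow> 0 \<le> f p" "\<And>p. p \<in> A \<Longrightarrow> 0 \<le> g p"
    and "\<And>p. p \<in> A \<Longrightarrow> f p \<le> E * g p" "\<And>p. p \<in> A \<Longrightarrow> g p \<le> E * f p"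
  shows "infsum f A \<le> E * infsum g A"
proof (cases "g summable_on A")
  case True
  then have "(\<lambda>p. E * g p) summable_on A" by (rule summable_on_cmult_right)
  moreover have "f summable_on A"
    using assms(1,3) by (intro summable_on_comparison_test[OF calculation]) auto
  ultimately have "infsum f A \<le> infsum (\<lambda>p. E * g p) A" using assms(3) by (intro infsum_mono)
  then show ?thesis by (simp add: infsum_cmult_right')
next
  case False
  \<comment> \<open>then \<open>f\<close> is not summable either, so both sides are the junk value \<open>0\<close>\<close>
  have "\<not> f summable_on A"
  proof
    assume "f summable_on A"
    then have "(\<lambda>p. E * f p) summable_on A" by (rule summable_on_cmult_right)
    then have "g summable_on A"
      using assms(2,4) by (intro summable_on_comparison_test[OF \<open>(\<lambda>p. E * f p) summable_on A\<close>]) auto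
    then show False using False by simp
  qed
  then show ?thesis using False by (simp add: infsum_not_exists)
qed

lemma abs_diff_le_if_ratio_bounded:
  fixes a b c :: real
  assumes "0 \<le> a" "0 \<le> b" "a \<le> c * b" "b \<le> c * a"
  shows "\<bar>a - b\<bar> \<le> \<bar>c - 1\<bar> * (2 + \<bar>c - 1\<bar>) * b"
proof -
  define t where "t = \<bar>c - 1\<bar>"
  have "c * u \<le> (1 + t) * u" if "0 \<le> u" for u
    using that by (intro mult_right_mono) (auto simp: t_def)
  then have ab: "a \<le> (1 + t) * b" and ba: "b \<le> (1 + t) * a"
    using assms by (meson order_trans)+
  have "0 \<le> t" by (simp add: t_def)
  have "a - b \<le> t * b" "b - a \<le> t * a" using ab ba by (simp_all add: algebra_simps)
  moreover have "t * a \<le> t * ((1 + t) * b)" using mult_left_mono[OF ab \<open>0 \<le> t\<close>] .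
  moreover have "0 \<le> t * b" "0 \<le> t * t * b" using assms(2) by (simp_all add: t_def)
  ultimately show ?thesis unfolding t_def[symmetric] by (simp add: abs_le_iff algebra_simps)
qed

lemma open_prefix_cylinder: "open {z :: nat \<Rightarrow> 'a::discrete_topology. \<forall>i<n. z i = x i}"
proof -
  have "{z :: nat \<Rightarrow> 'a. \<forall>i<n. z i = x i} = (\<Inter>i<n. (\<lambda>z. z i) -` {x i})" by auto
  also have "open \<dots>"
    by (intro open_INT ballI finite_lessThan open_vimage continuous_on_product_coordinates)
      (auto intro: discrete_topology_class.open_discrete)
  finally show ?thesis .
qed

lemma continuous_on_if_prefix_ratios_tend_to_1:
  fixes f :: "(nat \<Rightarrow> 'a::discrete_topology) \<Rightarrow> real"
  assumes nonneg: "\<forall>x\<in>S. 0 \<le> f x" and c: "c \<longlonglongrightarrow> 1"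
    and ratio: "\<forall>\<^sub>F n in sequentially. \<forall>x\<in>S. \<forall>x'\<in>S. (\<forall>i<n. x i = x' i) \<longrightarrow> f x \<le> c n * f x'"
  shows "continuous_on S f"
  unfolding continuous_on_def
proof
  fix x assume x: "x \<in> S"
  have "(\<lambda>n. \<bar>c n - 1\<bar> * (2 + \<bar>c n - 1\<bar>) * f x) \<longlonglongrightarrow> \<bar>1 - 1\<bar> * (2 + \<bar>1 - 1\<bar>) * f x"
    by (intro tendsto_intros c)
  then have small: "(\<lambda>n. \<bar>c n - 1\<bar> * (2 + \<bar>c n - 1\<bar>) * f x) \<longlonglongrightarrow> 0" by simp
  show "(f \<longlongrightarrow> f x) (at x within S)"
  proof (rule tendstoI)
    fix e :: real assume "0 < e"
    from eventually_conj[OF order_tendstoD(2)[OF small this] ratio]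
    obtain n where n: "\<bar>c n - 1\<bar> * (2 + \<bar>c n - 1\<bar>) * f x < e"
      and ratio_n: "\<forall>y\<in>S. \<forall>y'\<in>S. (\<forall>i<n. y i = y' i) \<longrightarrow> f y \<le> c n * f y'"
      by (auto simp: eventually_sequentially)
    have "dist (f y) (f x) < e" if "y \<in> S" "\<forall>i<n. y i = x i" for y
    proof -
      have "\<bar>f y - f x\<bar> \<le> \<bar>c n - 1\<bar> * (2 + \<bar>c n - 1\<bar>) * f x"
        using that x nonneg ratio_n by (intro abs_diff_le_if_ratio_bounded) auto
      then show ?thesis using n by (simp add: dist_real_def)
    qed
    then show "\<forall>\<^sub>F y in at x within S. dist (f y) (f x) < e"
      unfolding eventually_at_topological using open_prefix_cylinder by blast
  qed
qed

lemma bounded_if_distortion_on_finite_classes: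
  fixes f :: "'a \<Rightarrow> real" and \<kappa> :: "'a \<Rightarrow> 'b"
  assumes "finite (\<kappa> ` S)" "0 \<le> E"
    and distortion: "\<forall>x\<in>S. \<forall>x'\<in>S. \<kappa> x = \<kappa> x' \<longrightarrow> \<bar>f x\<bar> \<le> E * \<bar>f x'\<bar>"
  shows "\<exists>B. \<forall>x\<in>S. \<bar>f x\<bar> \<le> B"
proof -
  define rep where "rep k = (SOME x. x \<in> S \<and> \<kappa> x = k)" for k
  have rep: "rep (\<kappa> x) \<in> S \<and> \<kappa> (rep (\<kappa> x)) = \<kappa> x" if "x \<in> S" for x
    unfolding rep_def by (rule someI[of _ x]) (simp add: that)
  have "\<bar>f x\<bar> \<le> E * (\<Sum>k\<in>\<kappa> ` S. \<bar>f (rep k)\<bar>)" if "x \<in> S" for x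
  proof -
    have "\<bar>f x\<bar> \<le> E * \<bar>f (rep (\<kappa> x))\<bar>" using distortion rep that by metis
    also have "\<dots> \<le> E * (\<Sum>k\<in>\<kappa> ` S. \<bar>f (rep k)\<bar>)"
      using that assms(1,2) by (intro mult_left_mono member_le_sum) auto
    finally show ?thesis .
  qed
  then show ?thesis by blast
qed

lemma sum_SUP_measure_le_integral:
  fixes h :: "'a \<Rightarrow> real"
  assumes "finite_measure M" "finite I" "disjoint_family_on Cell I" "\<forall>i\<in>I. Cell i \<in> sets M"
    and h: "integrable M h" "\<forall>x\<in>space M. 0 \<le> h x" and "0 \<le> E"
    and distortion: "\<forall>i\<in>I. \<forall>x\<in>Cell i. \<forall>x'\<in>Cell i. \<bar>h x\<bar> \<le> E * h x'"
  shows "(\<Sum>i\<in>I. (SUP x\<in>Cell i. \<bar>h x\<bar>) * measure M (Cell i)) \<le> E * integral\<^sup>L M h"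
proof -
  have cell: "(SUP x\<in>Cell i. \<bar>h x\<bar>) * measure M (Cell i) \<le> E * (\<integral>x. h x * indicator (Cell i) x \<partial>M)"
    if i: "i \<in> I" for i
  proof (cases "Cell i = {}")
    case True
    then show ?thesis by simp
  next
    case False
    let ?s = "SUP x\<in>Cell i. \<bar>h x\<bar>"
    have s: "?s \<le> E * h x'" if "x' \<in> Cell i" for x'
      using distortion i that by (intro cSUP_least[OF False]) auto
    have Cell: "Cell i \<in> sets M" "emeasure M (Cell i) < \<infinity>"
      using assms(4) i finite_measure.emeasure_finite[OF assms(1)] by (auto simp: less_top[symmetric])
    have "?s * measure M (Cell i) = (\<integral>x. ?s * indicator (Cell i) x \<partial>M)"
      using Cell by simp
    also have "\<dots> \<le> (\<integral>x. E * (h x * indicator (Cell i) x) \<partial>M)"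
    proof (rule integral_mono)
      show "integrable M (\<lambda>x. ?s * indicator (Cell i) x)"
        using Cell by (intro integrable_mult_right integrable_real_indicator)
      show "integrable M (\<lambda>x. E * (h x * indicator (Cell i) x))"
        using Cell h(1) by (intro integrable_mult_right integrable_real_mult_indicator)
      show "?s * indicator (Cell i) x \<le> E * (h x * indicator (Cell i) x)" for x
        using s by (simp add: indicator_def)
    qed
    finally show ?thesis by simp
  qed
  have "(\<Sum>i\<in>I. (SUP x\<in>Cell i. \<bar>h x\<bar>) * measure M (Cell i)) \<le> E * (\<Sum>i\<in>I. \<integral>x. h x * indicator (Cell i) x \<partial>M)"
    unfolding sum_distrib_left by (intro sum_mono cell)
  also have "(\<Sum>i\<in>I. \<integral>x. h x * indicator (Cell i) x \<partial>M) = (\<integral>x. h x * indicator (\<Union>i\<in>I. Cell i) x \<partial>M)"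
    using assms(2-4) h(1)
    by (subst Bochner_Integration.integral_sum[symmetric])
      (auto simp: indicator_UN_disjoint sum_distrib_left intro!: integrable_real_mult_indicator)
  also have "\<dots> \<le> integral\<^sup>L M h"
    using h by (intro integral_mono') (auto simp: indicator_def)
  finally show ?thesis using \<open>0 \<le> E\<close> by (smt (verit) mult_left_mono)
qed

lemma shift_in_SFT: "x \<in> SFT d M \<Longrightarrow> shift r x \<in> SFT d M"
  by (simp add: SFT_def shift_def)

lemma sdist_le_if_eq_prefix:
  assumes "\<forall>i<n. x i = y i"
  shows "sdist x y \<le> (1/2) ^ n"
proof (cases "x = y")
  case False
  let ?k = "LEAST k. x k \<noteq> y k"
  from False obtain k where "x k \<noteq> y k" by auto
  then have "x ?k \<noteq> y ?k" by (rule LeastI)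
  then have "n \<le> ?k" using assms by (meson not_le)
  have "sdist x y = (1/2) ^ ?k"
    using False by (simp add: sdist_def powr_minus powr_realpow power_one_over inverse_eq_divide)
  also have "\<dots> \<le> (1/2) ^ n" using \<open>n \<le> ?k\<close> by (simp add: power_decreasing)
  finally show ?thesis .
qed (simp add: sdist_def)

lemma sum_half_powers: "(\<Sum>i<r. (1/2::real) ^ (n + r - i)) = (1/2) ^ n - (1/2) ^ (n + r)"
proof (induction r)
  case (Suc r)
  have "(\<Sum>i<r. (1/2::real) ^ (n + Suc r - i)) = (1/2) * (\<Sum>i<r. (1/2) ^ (n + r - i))"
    unfolding sum_distrib_left by (rule sum.cong) (auto simp: Suc_diff_le)
  then show ?case using Suc by simp
qed simp

locale lipschitz_potential =
  fixes d :: nat and M :: "nat \<Rightarrow> nat \<Rightarrow> nat" and \<phi> :: "(nat \<Rightarrow> nat) \<Rightarrow> real" and C :: real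
  assumes lipschitz: "\<forall>x\<in>SFT d M. \<forall>y\<in>SFT d M. \<bar>\<phi> x - \<phi> y\<bar> \<le> C * sdist x y"
    and C_nonneg: "0 \<le> C"
begin

lemma birk_diff_le:
  assumes "y \<in> SFT d M" "y' \<in> SFT d M" "\<forall>i<n + r. y i = y' i"
  shows "birk \<phi> r y - birk \<phi> r y' \<le> C * ((1/2) ^ n - (1/2) ^ (n + r))"
proof -
  have "\<phi> (shift i y) - \<phi> (shift i y') \<le> C * (1/2) ^ (n + r - i)" if "i < r" for i
  proof -
    have "\<forall>k<n + r - i. shift i y k = shift i y' k"
      using assms(3) that by (simp add: shift_def)
    then have "C * sdist (shift i y) (shift i y') \<le> C * (1/2) ^ (n + r - i)"
      by (intro mult_left_mono C_nonneg sdist_le_if_eq_prefix)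
    moreover have "\<bar>\<phi> (shift i y) - \<phi> (shift i y')\<bar> \<le> C * sdist (shift i y) (shift i y')"
      using lipschitz shift_in_SFT assms(1,2) by blast
    ultimately show ?thesis by linarith
  qed
  then have "birk \<phi> r y - birk \<phi> r y' \<le> (\<Sum>i<r. C * (1/2) ^ (n + r - i))"
    unfolding birk_def sum_subtractf[symmetric] by (intro sum_mono) simp
  also have "\<dots> = C * ((1/2) ^ n - (1/2) ^ (n + r))"
    by (simp add: sum_distrib_left[symmetric] sum_half_powers)
  finally show ?thesis .
qed

end

lemma open_cyl2: "open (cyl2 a b)"
proof -
  have "cyl2 a b = (\<lambda>z :: nat \<Rightarrow> nat. z 0) -` {a} \<inter> (\<lambda>z. z 1) -` {b}"
    by (auto simp: cyl2_def)
  also have "open \<dots>"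
    by (intro open_Int open_vimage continuous_on_product_coordinates discrete_topology_class.open_discrete)
  finally show ?thesis .
qed

section \<open>Regrafting preimages\<close>

definition green_letters :: "nat \<Rightarrow> nat \<Rightarrow> nat \<Rightarrow> nat \<Rightarrow> bool" where
  "green_letters K N a b \<longleftrightarrow> isA K a \<and> isD K N b \<or> isD K N a \<and> isA K b"

lemma forbidden_D_interior_isD:
  assumes "forbidden_D K N D' nm' u" "0 < i" "Suc i < length u"
  shows "isD K N (u ! i)"
proof -
  obtain a dl w di b where u: "u = [a, dl] @ w @ [di, b]"
    and letters: "\<forall>c\<in>set (dl # w @ [di]). isD K N c"
    using assms(1) unfolding forbidden_D_def by auto
  have "u ! i = (dl # w @ [di]) ! (i - 1)"
    using assms(2,3) u by (cases i) (auto simp: nth_append nth_Cons')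
  moreover have "i - 1 < length (dl # w @ [di])" using assms(2,3) u by auto
  ultimately show ?thesis using letters nth_mem by metis
qed

lemma forbidden_A_interior_isA:
  assumes "forbidden_A K N A' nm u" "0 < i" "Suc i < length u"
  shows "isA K (u ! i)"
proof -
  obtain d ak w aj e where u: "u = [d, ak] @ w @ [aj, e]"
    and letters: "\<forall>c\<in>set (ak # w @ [aj]). isA K c"
    using assms(1) unfolding forbidden_A_def by auto
  have "u ! i = (ak # w @ [aj]) ! (i - 1)"
    using assms(2,3) u by (cases i) (auto simp: nth_append nth_Cons')
  moreover have "i - 1 < length (ak # w @ [aj])" using assms(2,3) u by auto
  ultimately show ?thesis using letters nth_mem by metis
qed

definition graft :: "nat \<Rightarrow> (nat \<Rightarrow> nat) \<Rightarrow> (nat \<Rightarrow> nat) \<Rightarrow> nat \<Rightarrow> nat" where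
  "graft r y x = (\<lambda>i. if i < r then y i else x (i - r))"

lemma shift_graft [simp]: "shift r (graft r y x) = x"
  by (simp add: shift_def graft_def)

lemma graft_shift [simp]: "graft r y (shift r y) = y"
  by (auto simp: fun_eq_iff graft_def shift_def)

lemma graft_less [simp]: "i < r \<Longrightarrow> graft r y x i = y i"
  by (simp add: graft_def)

lemma graft_graft [simp]: "graft r (graft r y x) x' = graft r y x'"
  by (simp add: fun_eq_iff graft_def)

lemma graft_in_SFT:
  assumes "y \<in> SFT d M" "x \<in> SFT d M" "0 < r" "x 0 = y r"
  shows "graft r y x \<in> SFT d M"
  unfolding SFT_def
proof (intro CollectI allI conjI)
  fix k
  show "graft r y x k < d" using assms(1,2) by (simp add: SFT_def graft_def)
  consider "Suc k < r" | "Suc k = r" | "r \<le> k" by linarith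
  then show "M (graft r y x k) (graft r y x (Suc k)) = 1"
    using assms by cases (auto simp: SFT_def graft_def Suc_diff_le)
qed

lemma map_graft_upt_right:
  "r \<le> p \<Longrightarrow> map (graft r y x) [p..<p + l] = map x [p - r..<p - r + l]"
  by (rule nth_equalityI) (auto simp: graft_def)

lemma graft_eq_before:
  "x 0 = y r \<Longrightarrow> x 1 = y (Suc r) \<Longrightarrow> i < r + 2 \<Longrightarrow> graft r y x i = y i"
  by (auto simp: graft_def less_Suc_eq)

lemma graft_in_Sigma_m:
  assumes y: "y \<in> Sigma_m K N M0 A' D' nm nm'" and x: "x \<in> Sigma_m K N M0 A' D' nm nm'"
    and r: "0 < r" and x01: "x 0 = y r" "x 1 = y (Suc r)"
    and green: "green_letters K N (x 0) (x 1)"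
  shows "graft r y x \<in> Sigma_m K N M0 A' D' nm nm'"
proof -
  let ?z = "graft r y x"
  have "\<not> forbidden_D K N D' nm' (map ?z [p..<p + l]) \<and> \<not> forbidden_A K N A' nm (map ?z [p..<p + l])"
    for p l
  proof -
    consider "r \<le> p" | "p + l \<le> r + 2" | "p < r" "r + 2 < p + l" by linarith
    then show ?thesis
    proof cases
      case 1
      show ?thesis
        unfolding map_graft_upt_right[OF 1] using x unfolding Sigma_m_def by blast
    next
      case 2
      have "map ?z [p..<p + l] = map y [p..<p + l]"
        using 2 x01 by (auto intro!: map_cong graft_eq_before)
      then show ?thesis using y unfolding Sigma_m_def by (metis (no_types, lifting) mem_Collect_eq)
    next
      case 3
      let ?u = "map ?z [p..<p + l]"
      have u: "?u ! (r - p) = x 0" "?u ! Suc (r - p) = x 1"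
        and i: "0 < r - p" "Suc (r - p) < length ?u" "0 < Suc (r - p)" "Suc (Suc (r - p)) < length ?u"
        using 3 by (auto simp: graft_def)
      have "\<not> forbidden_D K N D' nm' ?u"
      proof
        assume "forbidden_D K N D' nm' ?u"
        then have "isD K N (x 0)" "isD K N (x 1)"
          using forbidden_D_interior_isD i u by metis+
        then show False using green by (auto simp: green_letters_def isA_def isD_def)
      qed
      moreover have "\<not> forbidden_A K N A' nm ?u"
      proof
        assume "forbidden_A K N A' nm ?u"
        then have "isA K (x 0)" "isA K (x 1)"
          using forbidden_A_interior_isA i u by metis+
        then show False using green by (auto simp: green_letters_def isA_def isD_def)
      qed
      ultimately show ?thesis ..
    qed
  qed
  moreover have "?z \<in> SFT (K + N) M0"
    using graft_in_SFT[OF _ _ r] x y x01 by (simp add: Sigma_m_def)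
  ultimately show ?thesis by (simp add: Sigma_m_def)
qed

definition regraft :: "(nat \<Rightarrow> nat) \<Rightarrow> (nat \<Rightarrow> nat) \<times> nat \<Rightarrow> (nat \<Rightarrow> nat) \<times> nat" where
  "regraft x = (\<lambda>(y, r). (graft r y x, r))"

lemma regraft_in_gpre:
  assumes "x' \<in> Sigma_m K N M0 A' D' nm nm'" "x' 0 = x 0" "x' 1 = x 1"
    and "p \<in> gpre K N (Sigma_m K N M0 A' D' nm nm') x"
  shows "regraft x' p \<in> gpre K N (Sigma_m K N M0 A' D' nm nm') x'"
proof -
  obtain y r where p: "p = (y, r)" by force
  have y: "y \<in> Sigma_m K N M0 A' D' nm nm'" and r: "2 \<le> r" and x: "x = shift r y"
    using assms(4) by (auto simp: p gpre_def)
  have "x 0 = y r" "x 1 = y (Suc r)" by (simp_all add: x shift_def)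
  moreover have "green_letters K N (x 0) (x 1)"
    using assms(4) by (auto simp: p gpre_def green_letters_def)
  ultimately have "graft r y x' \<in> Sigma_m K N M0 A' D' nm nm'"
    using graft_in_Sigma_m[OF y assms(1)] r assms(2,3) by simp
  then show ?thesis
    using assms(2-4) by (auto simp: p regraft_def gpre_def)
qed

lemma regraft_regraft: "p \<in> gpre K N S x \<Longrightarrow> regraft x (regraft x' p) = p"
  by (auto simp: regraft_def gpre_def)

lemma bij_betw_regraft_gpre:
  assumes "x \<in> Sigma_m K N M0 A' D' nm nm'" "x' \<in> Sigma_m K N M0 A' D' nm nm'"
    and "x' 0 = x 0" "x' 1 = x 1"
  shows "bij_betw (regraft x') (gpre K N (Sigma_m K N M0 A' D' nm nm') x)
           (gpre K N (Sigma_m K N M0 A' D' nm nm') x')"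
  using assms regraft_in_gpre[of x' K N M0 A' D' nm nm' x] regraft_in_gpre[of x K N M0 A' D' nm nm' x']
  by (intro bij_betw_byWitness[where f' = "regraft x"]) (auto simp: regraft_regraft)

lemma Sigma_m_subset_SFT: "Sigma_m K N M0 A' D' nm nm' \<subseteq> SFT (K + N) M0"
  by (auto simp: Sigma_m_def)

section \<open>Bounded distortion of the induced transfer operator\<close>

locale induced_scheme = lipschitz_potential "K + N" M0 \<phi> C
  for K N :: nat and M0 :: "nat \<Rightarrow> nat \<Rightarrow> nat" and \<phi> C +
  fixes A' D' :: "nat \<Rightarrow> nat \<Rightarrow> nat" and nm nm' :: nat and P :: real
begin

abbreviation Sm :: "(nat \<Rightarrow> nat) set" where
  "Sm \<equiv> Sigma_m K N M0 A' D' nm nm'"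

abbreviation L :: "((nat \<Rightarrow> nat) \<Rightarrow> real) \<Rightarrow> (nat \<Rightarrow> nat) \<Rightarrow> real" where
  "L \<equiv> induced_op K N Sm \<phi> P"

abbreviation green_iter :: "nat \<Rightarrow> (nat \<Rightarrow> nat) \<Rightarrow> real" where
  "green_iter j \<equiv> (L ^^ j) (indicator (green K N Sm))"

definition weight :: "(nat \<Rightarrow> nat) \<times> nat \<Rightarrow> real" where
  "weight p = exp (birk \<phi> (snd p) (fst p) - real (snd p) * P)"

lemma induced_op_eq: "L f x = (\<Sum>\<^sub>\<infinity>p\<in>gpre K N Sm x. weight p * f (fst p))"
  by (simp add: induced_op_def weight_def case_prod_unfold)

lemma induced_op_nonneg: "\<forall>y\<in>Sm. 0 \<le> f y \<Longrightarrow> 0 \<le> L f x"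
  unfolding induced_op_eq by (intro infsum_nonneg) (auto simp: weight_def gpre_def)

lemma green_iter_nonneg: "0 \<le> green_iter j x"
  by (induction j arbitrary: x) (simp_all add: induced_op_nonneg)

definition has_bounded_distortion :: "((nat \<Rightarrow> nat) \<Rightarrow> real) \<Rightarrow> bool" where
  "has_bounded_distortion f \<longleftrightarrow>
     (\<forall>n\<ge>2. \<forall>x\<in>Sm. \<forall>x'\<in>Sm. (\<forall>i<n. x i = x' i) \<longrightarrow> f x \<le> exp (C * (1/2) ^ n) * f x')"

lemma bounded_distortion_on_green_cylinder:
  assumes "has_bounded_distortion f" "x \<in> Sm" "x' \<in> Sm" "x 0 = x' 0" "x 1 = x' 1"
  shows "f x \<le> exp (C * (1/2) ^ 2) * f x'"
  using assms unfolding has_bounded_distortion_def by (auto simp: less_2_cases_iff)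

lemma term_le_regraft_term:
  assumes f: "\<forall>y\<in>Sm. 0 \<le> f y" "has_bounded_distortion f"
    and n: "2 \<le> n" and x': "x' \<in> Sm" and agree: "\<forall>i<n. x i = x' i"
    and p: "p \<in> gpre K N Sm x"
  shows "weight p * f (fst p) \<le> exp (C * (1/2) ^ n) * (weight (regraft x' p) * f (fst (regraft x' p)))"
proof -
  obtain y r where yr: "p = (y, r)" by force
  have y: "y \<in> Sm" and x: "x = shift r y" using p by (auto simp: yr gpre_def)
  have "regraft x' p \<in> gpre K N Sm x'"
    using regraft_in_gpre[OF x' _ _ p] agree n by simp
  then have y': "graft r y x' \<in> Sm" by (simp add: yr regraft_def gpre_def)
  have "y i = graft r y x' i" if "i < n + r" for i
  proof (cases "i < r")
    case False
    then have "y i = x (i - r)" by (simp add: x shift_def)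
    also have "\<dots> = x' (i - r)" using agree that False by simp
    finally show ?thesis using False by (simp add: graft_def)
  qed simp
  then have agree': "\<forall>i<n + r. y i = graft r y x' i" by blast
  have "f y \<le> exp (C * (1/2) ^ (n + r)) * f (graft r y x')"
    using f(2) y y' agree' n unfolding has_bounded_distortion_def by auto
  moreover have "birk \<phi> r y - birk \<phi> r (graft r y x') \<le> C * ((1/2) ^ n - (1/2) ^ (n + r))"
    using birk_diff_le agree' y y' Sigma_m_subset_SFT by blast
  then have "weight p \<le> exp (C * ((1/2) ^ n - (1/2) ^ (n + r))) * weight (regraft x' p)"
    by (simp add: yr regraft_def weight_def flip: exp_add)
  ultimately have "weight p * f y \<le>
      exp (C * ((1/2) ^ n - (1/2) ^ (n + r))) * weight (regraft x' p) * (exp (C * (1/2) ^ (n + r)) * f (graft r y x'))"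
    using f(1) y by (intro mult_mono) (auto simp: weight_def)
  also have "\<dots> = exp (C * (1/2) ^ n) * (weight (regraft x' p) * f (graft r y x'))"
    by (simp add: mult_ac right_diff_distrib flip: exp_add)
  finally show ?thesis by (simp add: yr regraft_def)
qed

lemma induced_op_bounded_distortion:
  assumes "\<forall>y\<in>Sm. 0 \<le> f y" "has_bounded_distortion f"
  shows "has_bounded_distortion (L f)"
  unfolding has_bounded_distortion_def
proof (intro allI impI ballI)
  fix n x x' assume n: "2 \<le> n" and x: "x \<in> Sm" and x': "x' \<in> Sm" and agree: "\<forall>i<n. x i = x' i"
  define t where "t = (\<lambda>p. weight p * f (fst p))"
  have "L f x = infsum t (gpre K N Sm x)" by (simp add: induced_op_eq t_def)
  also have "\<dots> \<le> exp (C * (1/2) ^ n) * infsum (\<lambda>p. t (regraft x' p)) (gpre K N Sm x)"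
  proof (rule infsum_le_scaled_if_comparable)
    fix p assume p: "p \<in> gpre K N Sm x"
    have p': "regraft x' p \<in> gpre K N Sm x'" using regraft_in_gpre[OF x' _ _ p] agree n by simp
    show "0 \<le> t p" "0 \<le> t (regraft x' p)"
      using p p' assms(1) by (auto simp: t_def weight_def gpre_def)
    show "t p \<le> exp (C * (1/2) ^ n) * t (regraft x' p)"
      unfolding t_def using term_le_regraft_term[OF assms n x' agree p] .
    show "t (regraft x' p) \<le> exp (C * (1/2) ^ n) * t p"
      unfolding t_def using term_le_regraft_term[OF assms n x _ p'] agree regraft_regraft[OF p] by simp
  qed
  also have "infsum (\<lambda>p. t (regraft x' p)) (gpre K N Sm x) = infsum t (gpre K N Sm x')"
    using bij_betw_regraft_gpre[OF x x'] agree n by (intro infsum_reindex_bij_betw) simp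
  also have "infsum t (gpre K N Sm x') = L f x'" by (simp add: induced_op_eq t_def)
  finally show "L f x \<le> exp (C * (1/2) ^ n) * L f x'" .
qed

lemma green_iter_bounded_distortion: "has_bounded_distortion (green_iter j)"
proof (induction j)
  case 0
  have "indicator (green K N Sm) x \<le> exp (C * (1/2) ^ n) * (indicator (green K N Sm) x' :: real)"
    if "2 \<le> n" "\<forall>i<n. x i = x' i" "x \<in> Sm" "x' \<in> Sm" for n x x'
    using that C_nonneg by (auto simp: green_def indicator_def)
  then show ?case by (auto simp: has_bounded_distortion_def)
next
  case (Suc j)
  then show ?case by (simp add: induced_op_bounded_distortion green_iter_nonneg)
qed

lemma continuous_on_if_bounded_distortion:
  assumes "\<forall>x\<in>Sm. 0 \<le> f x" "has_bounded_distortion f"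
  shows "continuous_on Sm f"
proof (rule continuous_on_if_prefix_ratios_tend_to_1)
  have "(\<lambda>n. exp (C * (1/2) ^ n)) \<longlonglongrightarrow> exp (C * 0)"
    by (intro tendsto_intros LIMSEQ_power_zero) simp
  then show "(\<lambda>n. exp (C * (1/2) ^ n)) \<longlonglongrightarrow> 1" by simp
  show "\<forall>\<^sub>F n in sequentially. \<forall>x\<in>Sm. \<forall>x'\<in>Sm. (\<forall>i<n. x i = x' i) \<longrightarrow> f x \<le> exp (C * (1/2) ^ n) * f x'"
    using assms(2) unfolding has_bounded_distortion_def eventually_sequentially by blast
qed (use assms(1) in blast)

lemma bounded_if_bounded_distortion:
  assumes "\<forall>x\<in>Sm. 0 \<le> f x" "has_bounded_distortion f"
  shows "\<exists>B. \<forall>x\<in>Sm. \<bar>f x\<bar> \<le> B"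
proof (rule bounded_if_distortion_on_finite_classes)
  show "finite ((\<lambda>x. (x 0, x 1)) ` Sm)"
    by (rule finite_subset[of _ "{..<K + N} \<times> {..<K + N}"]) (auto simp: Sigma_m_def SFT_def)
  show "\<forall>x\<in>Sm. \<forall>x'\<in>Sm. (x 0, x 1) = (x' 0, x' 1) \<longrightarrow> \<bar>f x\<bar> \<le> exp (C * (1/2) ^ 2) * \<bar>f x'\<bar>"
    using assms bounded_distortion_on_green_cylinder by auto
qed simp

lemma bounded_distortion_limit:
  assumes "\<forall>k. has_bounded_distortion (f k)" "\<forall>x\<in>Sm. (\<lambda>k. f k x) \<longlonglongrightarrow> g x"
  shows "has_bounded_distortion g"
  unfolding has_bounded_distortion_def
proof (intro allI impI ballI)
  fix n x x' assume "2 \<le> n" "x \<in> Sm" "x' \<in> Sm" "\<forall>i<n. x i = x' i"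
  then have "\<forall>k. f k x \<le> exp (C * (1/2) ^ n) * f k x'"
    using assms(1) unfolding has_bounded_distortion_def by blast
  moreover have "(\<lambda>k. f k x) \<longlonglongrightarrow> g x" "(\<lambda>k. f k x') \<longlonglongrightarrow> g x'"
    using assms(2) \<open>x \<in> Sm\<close> \<open>x' \<in> Sm\<close> by auto
  ultimately show "g x \<le> exp (C * (1/2) ^ n) * g x'"
    using LIMSEQ_le[OF _ tendsto_mult_left] by blast
qed

end

section \<open>The conformal measure\<close>

locale induced_scheme_measure = induced_scheme +
  fixes \<nu> :: "(nat \<Rightarrow> nat) measure" and H :: "(nat \<Rightarrow> nat) \<Rightarrow> real"
  assumes prob_space_\<nu>: "prob_space \<nu>"
    and sets_eq: "sets \<nu> = sets (restrict_space borel Sm)"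
    and eigenmeasure: "\<forall>f. continuous_on Sm f \<longrightarrow> (\<integral>x. L f x \<partial>\<nu>) = (\<integral>x. f x \<partial>\<nu>)"
    and H_limit: "uniform_limit Sm (\<lambda>k x. (\<Sum>j<k. green_iter j x) / real k) H sequentially"
begin

abbreviation green_avg :: "nat \<Rightarrow> (nat \<Rightarrow> nat) \<Rightarrow> real" where
  "green_avg k x \<equiv> (\<Sum>j<k. green_iter j x) / real k"

lemma finite_measure_\<nu>: "finite_measure \<nu>"
  using prob_space_\<nu> by (rule prob_space.finite_measure)

lemma space_eq: "space \<nu> = Sm"
  using sets_eq_imp_space_eq[OF sets_eq] by (simp add: space_restrict_space)

lemma integrable_if_bounded_distortion:
  assumes "\<forall>x\<in>Sm. 0 \<le> f x" "has_bounded_distortion f"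
  shows "integrable \<nu> f"
proof -
  obtain B where "\<forall>x\<in>Sm. \<bar>f x\<bar> \<le> B" using bounded_if_bounded_distortion[OF assms] by blast
  moreover have "f \<in> borel_measurable \<nu>"
    using borel_measurable_continuous_on_restrict[OF continuous_on_if_bounded_distortion[OF assms]]
    by (simp add: measurable_cong_sets[OF sets_eq refl])
  ultimately show ?thesis
    using space_eq by (intro finite_measure.integrable_const_bound[OF finite_measure_\<nu>, where B = B]) auto
qed

lemma integral_green_iter_le_1: "integral\<^sup>L \<nu> (green_iter j) \<le> 1"
proof (induction j)
  case 0
  have "integral\<^sup>L \<nu> (green_iter 0) \<le> (\<integral>x. 1 \<partial>\<nu>)"
    by (intro integral_mono') (auto simp: indicator_def finite_measure.integrable_const[OF finite_measure_\<nu>])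
  then show ?case using prob_space.prob_space[OF prob_space_\<nu>] by simp
next
  case (Suc j)
  have "continuous_on Sm (green_iter j)"
    by (intro continuous_on_if_bounded_distortion green_iter_bounded_distortion ballI green_iter_nonneg)
  then show ?case using eigenmeasure Suc by simp
qed

lemma green_avg_nonneg: "0 \<le> green_avg k x"
  by (simp add: sum_nonneg green_iter_nonneg)

lemma green_avg_bounded_distortion: "has_bounded_distortion (green_avg k)"
  unfolding has_bounded_distortion_def
proof (intro allI impI ballI)
  fix n x x' assume "2 \<le> n" "x \<in> Sm" "x' \<in> Sm" "\<forall>i<n. x i = x' i"
  then have "(\<Sum>j<k. green_iter j x) \<le> exp (C * (1/2) ^ n) * (\<Sum>j<k. green_iter j x')"
    using green_iter_bounded_distortion unfolding has_bounded_distortion_def sum_distrib_left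
    by (intro sum_mono) blast
  then show "green_avg k x \<le> exp (C * (1/2) ^ n) * green_avg k x'"
    by (simp add: divide_right_mono)
qed

lemma integrable_green_avg: "integrable \<nu> (green_avg k)"
  by (intro integrable_if_bounded_distortion green_avg_bounded_distortion ballI green_avg_nonneg)

lemma integral_green_avg_le_1: "integral\<^sup>L \<nu> (green_avg k) \<le> 1"
proof -
  have "integral\<^sup>L \<nu> (green_avg k) = (\<Sum>j<k. integral\<^sup>L \<nu> (green_iter j)) / real k"
    by (simp add: integrable_if_bounded_distortion green_iter_bounded_distortion green_iter_nonneg)
  also have "\<dots> \<le> (\<Sum>j<k. 1) / real k"
    by (intro divide_right_mono sum_mono integral_green_iter_le_1) simp
  also have "\<dots> \<le> 1" by simp
  finally show ?thesis .
qed

lemma H_nonneg: "x \<in> Sm \<Longrightarrow> 0 \<le> H x"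
  using tendsto_uniform_limitI[OF H_limit] green_avg_nonneg by (blast intro: LIMSEQ_le_const)

lemma H_bounded_distortion: "has_bounded_distortion H"
  using tendsto_uniform_limitI[OF H_limit] green_avg_bounded_distortion
  by (intro bounded_distortion_limit) auto

lemma integrable_H: "integrable \<nu> H"
  by (intro integrable_if_bounded_distortion H_bounded_distortion ballI H_nonneg)

lemma integral_H_le_1: "integral\<^sup>L \<nu> H \<le> 1"
proof (rule field_le_epsilon)
  fix \<epsilon> :: real assume "0 < \<epsilon>"
  from uniform_limitD[OF H_limit this] obtain k where k: "\<forall>x\<in>Sm. dist (green_avg k x) (H x) < \<epsilon>"
    by (auto simp: eventually_sequentially)
  have const: "integrable \<nu> (\<lambda>x. \<epsilon>)" by (rule finite_measure.integrable_const[OF finite_measure_\<nu>])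
  have "integral\<^sup>L \<nu> H \<le> (\<integral>x. green_avg k x + \<epsilon> \<partial>\<nu>)"
    using k space_eq
    by (intro integral_mono integrable_H Bochner_Integration.integrable_add integrable_green_avg const)
      (auto simp: dist_real_def)
  also have "\<dots> = integral\<^sup>L \<nu> (green_avg k) + \<epsilon>"
    using Bochner_Integration.integral_add[OF integrable_green_avg const] prob_space.prob_space[OF prob_space_\<nu>]
    by simp
  also have "\<dots> \<le> 1 + \<epsilon>" using integral_green_avg_le_1 by simp
  finally show "integral\<^sup>L \<nu> H \<le> 1 + \<epsilon>" .
qed

lemma green_cylinders_bound:
  "(\<Sum>(a, b)\<in>green_pairs K N M0. (SUP x\<in>cyl2 a b \<inter> Sm. \<bar>H x\<bar>) * measure \<nu> (cyl2 a b \<inter> Sm))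
     \<le> exp (C * (1/2) ^ 2)"
proof -
  let ?Cell = "\<lambda>p. cyl2 (fst p) (snd p) \<inter> Sm"
  have "(\<Sum>p\<in>green_pairs K N M0. (SUP x\<in>?Cell p. \<bar>H x\<bar>) * measure \<nu> (?Cell p))
      \<le> exp (C * (1/2) ^ 2) * integral\<^sup>L \<nu> H"
  proof (rule sum_SUP_measure_le_integral)
    show "finite_measure \<nu>" by (rule finite_measure_\<nu>)
    show "finite (green_pairs K N M0)"
      by (rule finite_subset[of _ "{..<K + N} \<times> {..<K + N}"]) (auto simp: green_pairs_def)
    show "disjoint_family_on ?Cell (green_pairs K N M0)"
      by (auto simp: disjoint_family_on_def cyl2_def)
    show "\<forall>p\<in>green_pairs K N M0. ?Cell p \<in> sets \<nu>"
      using borel_open[OF open_cyl2] by (auto simp: sets_eq sets_restrict_space)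
    show "\<forall>p\<in>green_pairs K N M0. \<forall>x\<in>?Cell p. \<forall>x'\<in>?Cell p. \<bar>H x\<bar> \<le> exp (C * (1/2) ^ 2) * H x'"
      using bounded_distortion_on_green_cylinder[OF H_bounded_distortion] H_nonneg
      by (auto simp: cyl2_def)
  qed (use integrable_H H_nonneg space_eq in auto)
  also have "\<dots> \<le> exp (C * (1/2) ^ 2)"
    using integral_H_le_1 by (simp add: mult_left_le)
  finally show ?thesis by (simp add: case_prod_unfold)
qed

end

lemma green_cylinders_empty_if_lipschitz_neg:
  assumes "C < 0" "\<forall>x\<in>SFT (K + N) M0. \<forall>y\<in>SFT (K + N) M0. \<bar>\<phi> x - \<phi> y\<bar> \<le> C * sdist x y"
    and "(a, b) \<in> green_pairs K N M0"
  shows "cyl2 a b \<inter> Sigma_m K N M0 A' D' nm nm' = {}"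
proof -
  have "x = y" if "x \<in> SFT (K + N) M0" "y \<in> SFT (K + N) M0" for x y
  proof (rule ccontr)
    assume "x \<noteq> y"
    then have "C * sdist x y < 0" using assms(1) by (simp add: sdist_def mult_neg_pos)
    then show False using assms(2) that by (smt (verit))
  qed
  then have "x 1 = x 0" if "x \<in> Sigma_m K N M0 A' D' nm nm'" for x
    using shift_in_SFT[of x _ _ 1] that Sigma_m_subset_SFT by (metis add_0 shift_def subsetD)
  moreover have "a \<noteq> b" using assms(3) by (auto simp: green_pairs_def isA_def isD_def)
  ultimately show ?thesis unfolding cyl2_def by (metis (mono_tags, lifting) Int_emptyI mem_Collect_eq)
qed

theorem lemma3:
  fixes K N :: nat
    and A D M0 A' D' :: "nat \<Rightarrow> nat \<Rightarrow> nat"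
    and \<phi> :: "(nat \<Rightarrow> nat) \<Rightarrow> real" and C\<phi> :: real
    and n n' :: "nat \<Rightarrow> nat" and m :: nat
    and \<nu> :: "(nat \<Rightarrow> nat) measure" and H :: "(nat \<Rightarrow> nat) \<Rightarrow> real"
  assumes KN: "0 < K" "0 < N"
    and A: "zero_one_matrix K A" "irreducible_matrix K A"
    and D: "zero_one_matrix N D" "irreducible_matrix N D"
    and M0: "zero_one_matrix (K + N) M0" "primitive_matrix (K + N) M0"
      "\<forall>i<K. \<forall>j<K. M0 i j = A i j" "\<forall>i<N. \<forall>j<N. M0 (K + i) (K + j) = D i j"
    and lip: "\<forall>x\<in>SFT (K + N) M0. \<forall>y\<in>SFT (K + N) M0. \<bar>\<phi> x - \<phi> y\<bar> \<le> C\<phi> * sdist x y"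
    and P_eq: "pressure \<phi> (only_A K (SFT (K + N) M0)) = pressure \<phi> (only_D K N (SFT (K + N) M0))"
    and A': "zero_one_matrix K A'" "\<forall>i<K. \<forall>j<K. A' i j \<le> A i j" "\<exists>i<K. \<exists>j<K. A' i j \<noteq> A i j"
      "\<forall>k<K. (\<exists>i<N. M0 (K + i) k = 1) \<longrightarrow> (\<exists>j<K. A' k j \<noteq> 0)"
    and D': "zero_one_matrix N D'" "\<forall>i<N. \<forall>j<N. D' i j \<le> D i j" "\<exists>i<N. \<exists>j<N. D' i j \<noteq> D i j"
      "\<forall>l<N. (\<exists>j<K. M0 j (K + l) = 1) \<longrightarrow> (\<exists>i<N. D' l i \<noteq> 0)"
    and seqs: "strict_mono n" "strict_mono n'"
    and nu: "prob_space \<nu>"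
      "sets \<nu> = sets (restrict_space borel (Sigma_m K N M0 A' D' (n m) (n' m)))"
      "\<forall>f. continuous_on (Sigma_m K N M0 A' D' (n m) (n' m)) f \<longrightarrow>
         (\<integral>x. induced_op K N (Sigma_m K N M0 A' D' (n m) (n' m)) \<phi>
                 (pressure \<phi> (Sigma_m K N M0 A' D' (n m) (n' m))) f x \<partial>\<nu>) = (\<integral>x. f x \<partial>\<nu>)"
    and H: "uniform_limit (Sigma_m K N M0 A' D' (n m) (n' m))
      (\<lambda>k x. (\<Sum>j<k. ((induced_op K N (Sigma_m K N M0 A' D' (n m) (n' m)) \<phi>
                 (pressure \<phi> (Sigma_m K N M0 A' D' (n m) (n' m)))) ^^ j)
                 (indicator (green K N (Sigma_m K N M0 A' D' (n m) (n' m)))) x) / real k)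
      H sequentially"
  shows "(\<Sum>(a, b)\<in>green_pairs K N M0.
           (SUP x\<in>cyl2 a b \<inter> Sigma_m K N M0 A' D' (n m) (n' m). \<bar>H x\<bar>) *
           measure \<nu> (cyl2 a b \<inter> Sigma_m K N M0 A' D' (n m) (n' m))) \<le> exp (C\<phi> / 2)"
proof (cases "C\<phi> < 0")
  case True
  then have "\<forall>p\<in>green_pairs K N M0. cyl2 (fst p) (snd p) \<inter> Sigma_m K N M0 A' D' (n m) (n' m) = {}"
    using green_cylinders_empty_if_lipschitz_neg[OF True lip] by auto
  then show ?thesis by (simp add: case_prod_unfold)
next
  case False
  interpret induced_scheme_measure K N M0 \<phi> C\<phi> A' D' "n m" "n' m"
      "pressure \<phi> (Sigma_m K N M0 A' D' (n m) (n' m))" \<nu> H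
    using lip False nu H
    by (intro induced_scheme_measure.intro induced_scheme_measure_axioms.intro induced_scheme.intro
        lipschitz_potential.intro)
      simp_all
  have "exp (C\<phi> * (1/2) ^ 2) \<le> exp (C\<phi> / 2)" using False by (simp add: power2_eq_square)
  with green_cylinders_bound show ?thesis by linarith
qed

end
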